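(* Let $a<0$ and $m\in(-1,0)$, and let $L_a(M,m)$ be as defined in the context. If $0<M_1<M_2$ and $\beta_+(M_j)<0$ for $j=1,2$, then $L_a(M_1,m)>L_a(M_2,m)$. Moreover $L_a(0,m)=0$ and $\lim_{M\to+\infty}L_a(M,m)=a+\ln(1-a)$.
   Context: Let $r(x)=ax/(1+x)$ for $x>-1$. For $M\ge0$, $m\in(-1,0)$ set $\alpha_+(M)=\frac{M}{r(M)}-\frac{r(M)}{2ar(m)}=\frac{1+M}{a}-\frac{M(1+m)}{2am(1+M)}$, $\beta_+(M)=\frac{M}{r(M)}+\frac{r(M)}{2ar(m)}=\frac{1+M}{a}+\frac{M(1+m)}{2am(1+M)}$, and $z_+(t)=M$ for $t\le\alpha_+$, $z_+(t)=M+\frac{ar(m)}{2}(t-\alpha_+)^2$ for $\alpha_+\le t\le\beta_+$, $z_+(t)=r(M)t$ for $\beta_+\le t\le0$. Define $L_a(M,m)=\int_{-1}^0 r(z_+(s))\,ds$. *)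

theory Defs
  imports "HOL-Analysis.Analysis"
begin

definition r :: "real \<Rightarrow> real \<Rightarrow> real" where
  "r a x = a * x / (1 + x)"

definition alpha_plus :: "real \<Rightarrow> real \<Rightarrow> real \<Rightarrow> real" where
  "alpha_plus a m M = (1 + M) / a - M * (1 + m) / (2 * a * m * (1 + M))"

definition beta_plus :: "real \<Rightarrow> real \<Rightarrow> real \<Rightarrow> real" where
  "beta_plus a m M = (1 + M) / a + M * (1 + m) / (2 * a * m * (1 + M))"

definition z_plus :: "real \<Rightarrow> real \<Rightarrow> real \<Rightarrow> real \<Rightarrow> real" where
  "z_plus a m M t =
    (if t \<le> alpha_plus a m M then M
     else if t \<le> beta_plus a m M then M + a * r a m / 2 * (t - alpha_plus a m M)^2
     else r a M * t)"

definition L :: "real \<Rightarrow> real \<Rightarrow> real \<Rightarrow> real" where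
  "L a M m = integral {-1..0} (\<lambda>s. r a (z_plus a m M s))"

end

theory Submission
  imports Defs "HOL-Real_Asymp.Real_Asymp"
begin

text \<open>
  For \<open>k < 0\<close> and \<open>\<rho> < 0\<close>, a profile that is constant \<open>M\<close>, then a parabola of curvature \<open>k\<close>,
  then the line \<open>\<rho> t\<close> is concave, hence the lower envelope of its tangent lines, whose slopes
  range over \<open>[\<rho>, 0]\<close>. The function \<open>z\<^sub>+\<close> is such a profile with \<open>k = a r(m)\<close> and \<open>\<rho> = r(M)\<close>.
  Comparing two profiles of equal curvature through tangents of a common slope shows that
  increasing \<open>M\<close> (which lowers \<open>r(M)\<close>) raises \<open>z\<^sub>+\<close> strictly on \<open>t < 0\<close> as long as the
  parabola ends before \<open>0\<close>; as \<open>r\<close> is decreasing on \<open>[0, \<infinity>)\<close> for \<open>a < 0\<close>, \<open>L\<close> decreases.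
  For large \<open>M\<close> the parabola ends before \<open>-1\<close>, so \<open>z\<^sub>+(t) = r(M) t\<close> on \<open>[-1, 0]\<close>, the integral
  has a closed form, and the limit follows from \<open>r(M) \<rightarrow> a\<close>.
\<close>

definition parabola_start :: "real \<Rightarrow> real \<Rightarrow> real \<Rightarrow> real" where
  "parabola_start k M \<rho> = M / \<rho> - \<rho> / (2 * k)"

definition parabola_end :: "real \<Rightarrow> real \<Rightarrow> real \<Rightarrow> real" where
  "parabola_end k M \<rho> = M / \<rho> + \<rho> / (2 * k)"

definition profile :: "real \<Rightarrow> real \<Rightarrow> real \<Rightarrow> real \<Rightarrow> real" where
  "profile k M \<rho> t =
    (if t \<le> parabola_start k M \<rho> then M
     else if t \<le> parabola_end k M \<rho> then M + k / 2 * (t - parabola_start k M \<rho>)\<^sup>2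
     else \<rho> * t)"

text \<open>For \<open>\<rho> \<le> s \<le> 0\<close> this is the tangent line of slope \<open>s\<close> to \<open>profile k M \<rho>\<close>.\<close>

definition tangent :: "real \<Rightarrow> real \<Rightarrow> real \<Rightarrow> real \<Rightarrow> real \<Rightarrow> real" where
  "tangent k M \<rho> s t = M + s * (t - parabola_start k M \<rho>) - s\<^sup>2 / (2 * k)"

lemma parabola_end_minus_start: "k \<noteq> 0 \<Longrightarrow> parabola_end k M \<rho> - parabola_start k M \<rho> = \<rho> / k"
  by (simp add: parabola_start_def parabola_end_def field_simps)

lemma parabola_start_le_end:
  assumes "k < 0" "\<rho> < 0"
  shows "parabola_start k M \<rho> \<le> parabola_end k M \<rho>"
proof -
  have "0 < \<rho> / k" using assms by (simp add: divide_neg_neg)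
  then show ?thesis using parabola_end_minus_start[of k M \<rho>] assms by simp
qed

lemma profile_eq_linear:
  assumes "k < 0" "\<rho> < 0" "parabola_end k M \<rho> < t"
  shows "profile k M \<rho> t = \<rho> * t"
  using parabola_start_le_end[of k \<rho> M] assms by (simp add: profile_def)

lemma tangent_minus_linear:
  assumes "k \<noteq> 0" "\<rho> \<noteq> 0"
  shows "tangent k M \<rho> s t - s * t = - parabola_end k M \<rho> * (s - \<rho>) - (s - \<rho>)\<^sup>2 / (2 * k)"
  using assms
  by (simp add: tangent_def parabola_start_def parabola_end_def field_simps power2_eq_square)

lemma tangent_ge_linear:
  assumes "k < 0" "\<rho> < 0" "\<rho> \<le> s" "parabola_end k M \<rho> \<le> 0"
  shows "s * t \<le> tangent k M \<rho> s t"
proof -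
  have "parabola_end k M \<rho> * (s - \<rho>) \<le> 0" using assms by (simp add: mult_nonpos_nonneg)
  moreover have "0 \<le> - (s - \<rho>)\<^sup>2 / (2 * k)" using assms by (simp add: divide_nonneg_neg)
  ultimately show ?thesis using tangent_minus_linear[of k \<rho> M s t] assms by simp
qed

lemma tangent_gt_linear:
  assumes "k < 0" "\<rho> < 0" "\<rho> < s" "parabola_end k M \<rho> < 0"
  shows "s * t < tangent k M \<rho> s t"
proof -
  have "parabola_end k M \<rho> * (s - \<rho>) < 0" using assms by (simp add: mult_neg_pos)
  moreover have "0 \<le> - (s - \<rho>)\<^sup>2 / (2 * k)" using assms by (simp add: divide_nonneg_neg)
  ultimately show ?thesis using tangent_minus_linear[of k \<rho> M s t] assms by simp
qed

lemma tangent_at_final_slope: "k \<noteq> 0 \<Longrightarrow> \<rho> \<noteq> 0 \<Longrightarrow> tangent k M \<rho> \<rho> t = \<rho> * t"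
  using tangent_minus_linear[of k \<rho> M \<rho> t] by simp

lemma profile_le_tangent:
  assumes k: "k < 0" and \<rho>: "\<rho> < 0" and s: "\<rho> \<le> s" "s \<le> 0"
  shows "profile k M \<rho> t \<le> tangent k M \<rho> s t"
proof -
  let ?\<alpha> = "parabola_start k M \<rho>" and ?\<beta> = "parabola_end k M \<rho>"
  have nonneg: "0 \<le> - x\<^sup>2 / (2 * k)" for x using k by (simp add: divide_nonneg_neg)
  consider "t \<le> ?\<alpha>" | "?\<alpha> < t" "t \<le> ?\<beta>" | "?\<beta> < t" by linarith
  then show ?thesis
  proof cases
    case 1
    then have "0 \<le> s * (t - ?\<alpha>)" using s by (simp add: mult_nonpos_nonpos)
    then show ?thesis using 1 nonneg[of s] by (simp add: profile_def tangent_def)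
  next
    case 2
    have "tangent k M \<rho> s t - profile k M \<rho> t = - (s - k * (t - ?\<alpha>))\<^sup>2 / (2 * k)"
      using 2 k by (simp add: profile_def tangent_def field_simps power2_eq_square)
    then show ?thesis using nonneg[of "s - k * (t - ?\<alpha>)"] by linarith
  next
    case 3
    have "tangent k M \<rho> s t - profile k M \<rho> t = (s - \<rho>) * (t - ?\<beta>) - (s - \<rho>)\<^sup>2 / (2 * k)"
      using tangent_minus_linear[of k \<rho> M s t] profile_eq_linear[OF k \<rho> 3] k \<rho>
      by (simp add: algebra_simps)
    moreover have "0 \<le> (s - \<rho>) * (t - ?\<beta>)" using 3 s by simp
    ultimately show ?thesis using nonneg[of "s - \<rho>"] by linarith
  qed
qed

lemma profile_eq_tangent:
  assumes k: "k < 0" and \<rho>: "\<rho> < 0"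
  obtains s where "\<rho> \<le> s" "s \<le> 0" "profile k M \<rho> t = tangent k M \<rho> s t"
proof -
  let ?\<alpha> = "parabola_start k M \<rho>" and ?\<beta> = "parabola_end k M \<rho>"
  consider "t \<le> ?\<alpha>" | "?\<alpha> < t" "t \<le> ?\<beta>" | "?\<beta> < t" by linarith
  then show ?thesis
  proof cases
    case 1
    then show ?thesis using \<rho> by (intro that[of 0]) (simp_all add: profile_def tangent_def)
  next
    case 2
    have "k * ?\<beta> = k * ?\<alpha> + \<rho>" using parabola_end_minus_start[of k M \<rho>] k by (simp add: field_simps)
    moreover have "k * ?\<beta> \<le> k * t" using 2 k by (simp add: mult_left_mono_neg)
    ultimately have "\<rho> \<le> k * (t - ?\<alpha>)" by (simp add: algebra_simps)
    moreover have "k * (t - ?\<alpha>) \<le> 0" using 2 k by (simp add: mult_nonpos_nonneg)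
    moreover have "profile k M \<rho> t = tangent k M \<rho> (k * (t - ?\<alpha>)) t"
      using 2 k by (simp add: profile_def tangent_def field_simps power2_eq_square)
    ultimately show ?thesis by (rule that)
  next
    case 3
    then show ?thesis using k \<rho>
      by (intro that[of \<rho>]) (simp_all add: profile_eq_linear tangent_at_final_slope)
  qed
qed

lemma profile_nonneg:
  assumes k: "k < 0" and \<rho>: "\<rho> < 0" and \<beta>: "parabola_end k M \<rho> \<le> 0" and t: "t \<le> 0"
  shows "0 \<le> profile k M \<rho> t"
proof -
  obtain s where s: "\<rho> \<le> s" "s \<le> 0" and eq: "profile k M \<rho> t = tangent k M \<rho> s t"
    using profile_eq_tangent[OF k \<rho>] .
  have "0 \<le> s * t" using s t by (simp add: mult_nonpos_nonpos)
  also have "\<dots> \<le> profile k M \<rho> t" using tangent_ge_linear[OF k \<rho> s(1) \<beta>] eq by simp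
  finally show ?thesis .
qed

lemma profile_less_profile:
  assumes k: "k < 0" and \<rho>: "\<rho>\<^sub>2 < \<rho>\<^sub>1" "\<rho>\<^sub>1 < 0" and M: "M\<^sub>1 < M\<^sub>2"
    and \<beta>: "parabola_end k M\<^sub>2 \<rho>\<^sub>2 < 0" and t: "t < 0"
  shows "profile k M\<^sub>1 \<rho>\<^sub>1 t < profile k M\<^sub>2 \<rho>\<^sub>2 t"
proof -
  have \<rho>\<^sub>2: "\<rho>\<^sub>2 < 0" using \<rho> by simp
  obtain s where s: "\<rho>\<^sub>2 \<le> s" "s \<le> 0" and eq: "profile k M\<^sub>2 \<rho>\<^sub>2 t = tangent k M\<^sub>2 \<rho>\<^sub>2 s t"
    using profile_eq_tangent[OF k \<rho>\<^sub>2] .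
  show ?thesis
  proof (cases "s < \<rho>\<^sub>1")
    case True
    have "profile k M\<^sub>1 \<rho>\<^sub>1 t \<le> \<rho>\<^sub>1 * t"
      using profile_le_tangent[OF k \<rho>(2) order_refl] \<rho> k tangent_at_final_slope by simp
    also have "\<dots> < s * t" using True t by simp
    also have "\<dots> \<le> profile k M\<^sub>2 \<rho>\<^sub>2 t"
      using tangent_ge_linear[OF k \<rho>\<^sub>2 s(1)] \<beta> eq by simp
    finally show ?thesis .
  next
    case False
    txt \<open>Tangents of equal slope \<open>x\<close> differ by an affine function of \<open>x\<close>, positive at both
      ends of \<open>[\<rho>\<^sub>1, 0]\<close>.\<close>
    let ?d = "parabola_start k M\<^sub>2 \<rho>\<^sub>2 - parabola_start k M\<^sub>1 \<rho>\<^sub>1"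
    have diff: "tangent k M\<^sub>2 \<rho>\<^sub>2 x t - tangent k M\<^sub>1 \<rho>\<^sub>1 x t = (M\<^sub>2 - M\<^sub>1) - x * ?d" for x
      by (simp add: tangent_def algebra_simps)
    have "\<rho>\<^sub>1 * t < tangent k M\<^sub>2 \<rho>\<^sub>2 \<rho>\<^sub>1 t" using tangent_gt_linear[OF k \<rho>\<^sub>2 \<rho>(1) \<beta>] .
    then have at_\<rho>\<^sub>1: "0 < (M\<^sub>2 - M\<^sub>1) - \<rho>\<^sub>1 * ?d"
      using diff[of \<rho>\<^sub>1] tangent_at_final_slope[of k \<rho>\<^sub>1 M\<^sub>1 t] k \<rho> by simp
    have "0 < (M\<^sub>2 - M\<^sub>1) - s * ?d"
    proof (cases "0 \<le> ?d")
      case True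
      then have "s * ?d \<le> 0" using s(2) by (simp add: mult_nonpos_nonneg)
      then show ?thesis using M by linarith
    next
      case False
      then have "s * ?d \<le> \<rho>\<^sub>1 * ?d" using \<open>\<not> s < \<rho>\<^sub>1\<close> by (simp add: mult_right_mono_neg)
      then show ?thesis using at_\<rho>\<^sub>1 by linarith
    qed
    moreover have "profile k M\<^sub>1 \<rho>\<^sub>1 t \<le> tangent k M\<^sub>1 \<rho>\<^sub>1 s t"
      using profile_le_tangent[OF k \<rho>(2)] False s(2) by simp
    ultimately show ?thesis using diff[of s] eq by simp
  qed
qed

lemma continuous_on_profile:
  assumes k: "k < 0" and \<rho>: "\<rho> < 0"
  shows "continuous_on UNIV (profile k M \<rho>)"
proof -
  let ?\<alpha> = "parabola_start k M \<rho>" and ?\<beta> = "parabola_end k M \<rho>"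
  have "M + k / 2 * (\<rho> / k)\<^sup>2 = \<rho> * ?\<beta>"
    using k \<rho> by (simp add: parabola_end_def field_simps power2_eq_square)
  then have glue: "M + k * (?\<beta> - ?\<alpha>)\<^sup>2 / 2 = \<rho> * ?\<beta>"
    using k by (simp add: parabola_end_minus_start)
  have right: "continuous_on {?\<alpha>..} (\<lambda>t. if t \<le> ?\<beta> then M + k / 2 * (t - ?\<alpha>)\<^sup>2 else \<rho> * t)"
    by (rule continuous_on_cases_1) (auto intro!: continuous_intros simp: glue)
  show ?thesis
    unfolding profile_def[abs_def]
    by (rule continuous_on_cases_1) (use right in \<open>auto simp: atLeast_def parabola_start_le_end[OF k \<rho>]\<close>)
qed

lemma r_strict_antimono:
  assumes "a < 0" "0 \<le> x" "x < y"
  shows "r a y < r a x"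
proof -
  have "x / (1 + x) < y / (1 + y)" using assms by (simp add: field_simps)
  then have "a * (y / (1 + y)) < a * (x / (1 + x))" by (rule mult_strict_left_mono_neg[OF _ assms(1)])
  then show ?thesis by (simp add: r_def)
qed

lemma r_neg: "a < 0 \<Longrightarrow> 0 < x \<Longrightarrow> r a x < 0"
  using r_strict_antimono[of a 0 x] by (simp add: r_def)

lemma r_pos: "a < 0 \<Longrightarrow> -1 < m \<Longrightarrow> m < 0 \<Longrightarrow> 0 < r a m"
  by (simp add: r_def mult_neg_neg)

lemma continuous_on_r: "continuous_on {-1<..} (r a)"
  unfolding r_def by (intro continuous_intros) auto

lemma alpha_beta_plus_eq:
  assumes "a < 0" "-1 < m" "m < 0" "0 < M"
  shows "alpha_plus a m M = M / r a M - r a M / (2 * a * r a m)"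
    and "beta_plus a m M = M / r a M + r a M / (2 * a * r a m)"
proof -
  have nz: "a \<noteq> 0" "m \<noteq> 0" "1 + m \<noteq> 0" "1 + M \<noteq> 0" "M \<noteq> 0" using assms by auto
  have "M / r a M = (1 + M) / a" using nz by (simp add: r_def)
  moreover have "r a M / (2 * a * r a m) = M * (1 + m) / (2 * a * m * (1 + M))"
    using nz by (simp add: r_def divide_simps)
  ultimately show "alpha_plus a m M = M / r a M - r a M / (2 * a * r a m)"
    and "beta_plus a m M = M / r a M + r a M / (2 * a * r a m)"
    by (simp_all add: alpha_plus_def beta_plus_def)
qed

lemma z_plus_eq_profile:
  assumes "a < 0" "-1 < m" "m < 0" "0 < M"
  shows "z_plus a m M = profile (a * r a m) M (r a M)"
  using alpha_beta_plus_eq[OF assms]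
  by (simp add: fun_eq_iff z_plus_def profile_def parabola_start_def parabola_end_def mult.assoc)

lemma parabola_end_eq_beta_plus:
  assumes "a < 0" "-1 < m" "m < 0" "0 < M"
  shows "parabola_end (a * r a m) M (r a M) = beta_plus a m M"
  using alpha_beta_plus_eq(2)[OF assms] by (simp add: parabola_end_def mult.assoc)

lemma continuous_on_r_profile:
  assumes "k < 0" "\<rho> < 0" "parabola_end k M \<rho> \<le> 0"
  shows "continuous_on {-1..0} (\<lambda>s. r a (profile k M \<rho> s))"
proof (rule continuous_on_compose2[OF continuous_on_r])
  show "continuous_on {-1..0} (profile k M \<rho>)"
    using continuous_on_profile[OF assms(1,2)] by (rule continuous_on_subset) simp
  show "profile k M \<rho> ` {-1..0} \<subseteq> {-1<..}"
    using profile_nonneg[OF assms] by force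
qed

lemma L_strict_antimono:
  assumes a: "a < 0" and m: "-1 < m" "m < 0" and M: "0 < M\<^sub>1" "M\<^sub>1 < M\<^sub>2"
    and \<beta>: "beta_plus a m M\<^sub>1 < 0" "beta_plus a m M\<^sub>2 < 0"
  shows "L a M\<^sub>2 m < L a M\<^sub>1 m"
proof -
  define k where "k = a * r a m"
  have k: "k < 0" using r_pos[OF a m] a by (simp add: k_def mult_neg_pos)
  have \<rho>: "r a M\<^sub>2 < r a M\<^sub>1" "r a M\<^sub>1 < 0" using r_strict_antimono[OF a] r_neg[OF a] M by auto
  have M\<^sub>2: "0 < M\<^sub>2" using M by simp
  note \<beta>_eq = parabola_end_eq_beta_plus[OF a m, folded k_def]
  let ?f = "\<lambda>M s. r a (profile k M (r a M) s)"
  have "integral {-1..0} (?f M\<^sub>2) < integral {-1..0} (?f M\<^sub>1)"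
  proof (rule integral_less_real)
    show "continuous_on {-1..0} (?f M\<^sub>1)" "continuous_on {-1..0} (?f M\<^sub>2)"
      using continuous_on_r_profile[OF k] \<rho> \<beta> \<beta>_eq M\<^sub>2 M by auto
    show "{-1<..<0::real} \<noteq> {}" by (simp add: greaterThanLessThan_empty_iff)
  next
    fix t :: real assume t: "t \<in> {-1<..<0}"
    have "profile k M\<^sub>1 (r a M\<^sub>1) t < profile k M\<^sub>2 (r a M\<^sub>2) t"
      using profile_less_profile[OF k \<rho>] M \<beta>(2) \<beta>_eq[OF M\<^sub>2] t by simp
    moreover have "0 \<le> profile k M\<^sub>1 (r a M\<^sub>1) t"
      using profile_nonneg[OF k \<rho>(2)] \<beta>(1) \<beta>_eq M t by simp
    ultimately show "?f M\<^sub>2 t < ?f M\<^sub>1 t" using r_strict_antimono[OF a] by blast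
  qed
  then show ?thesis using z_plus_eq_profile[OF a m, folded k_def] M M\<^sub>2 by (simp add: L_def)
qed

lemma z_plus_at_zero: "z_plus a m 0 = (\<lambda>_. 0)"
  by (simp add: fun_eq_iff z_plus_def alpha_plus_def beta_plus_def r_def)

lemma L_at_zero: "L a 0 m = 0"
  by (simp add: L_def z_plus_at_zero r_def)

lemma integral_r_linear:
  assumes c: "c < 1" "c \<noteq> 0"
  shows "integral {-1..0} (\<lambda>s. r a (c * s)) = a + a * ln (1 - c) / c"
proof -
  define \<Phi> where "\<Phi> s = a * s - a * ln (1 + c * s) / c" for s
  have "((\<lambda>s. r a (c * s)) has_integral \<Phi> 0 - \<Phi> (-1)) {-1..0}"
  proof (rule fundamental_theorem_of_calculus)
    fix s :: real assume s: "s \<in> {-1..0}"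
    have "0 < 1 + c * s"
    proof (cases "0 \<le> c")
      case True
      then have "c * -1 \<le> c * s" using s by (intro mult_left_mono) auto
      then show ?thesis using c by simp
    next
      case False
      then show ?thesis using s by (simp add: mult_nonpos_nonpos add_pos_nonneg)
    qed
    then have "(\<Phi> has_real_derivative r a (c * s)) (at s)"
      unfolding \<Phi>_def using c
      by (auto intro!: derivative_eq_intros simp: r_def divide_simps) (simp add: algebra_simps)
    then show "(\<Phi> has_vector_derivative r a (c * s)) (at s within {-1..0})"
      by (simp add: has_real_derivative_iff_has_vector_derivative has_vector_derivative_at_within)
  qed simp
  then show ?thesis by (simp add: integral_unique \<Phi>_def)
qed

lemma L_eq_closed_form:
  assumes a: "a < 0" and m: "-1 < m" "m < 0" and M: "0 < M" and \<beta>: "beta_plus a m M < -1"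
  shows "L a M m = a + a * ln (1 - r a M) / r a M"
proof -
  have k: "a * r a m < 0" and \<rho>: "r a M < 0"
    using r_pos[OF a m] r_neg[OF a M] a by (auto simp: mult_neg_pos)
  have "z_plus a m M s = r a M * s" if "s \<in> {-1..0}" for s
    using profile_eq_linear[OF k \<rho>] z_plus_eq_profile[OF a m M] parabola_end_eq_beta_plus[OF a m M] \<beta> that
    by simp
  then have "L a M m = integral {-1..0} (\<lambda>s. r a (r a M * s))"
    unfolding L_def by (intro integral_cong) simp
  also have "\<dots> = a + a * ln (1 - r a M) / r a M"
    using \<rho> by (intro integral_r_linear) auto
  finally show ?thesis .
qed

lemma tendsto_L_at_top:
  assumes a: "a < 0" and m: "-1 < m" "m < 0"
  shows "((\<lambda>M. L a M m) \<longlongrightarrow> a + ln (1 - a)) at_top"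
proof -
  have "filterlim (beta_plus a m) at_bot at_top"
    using a m unfolding beta_plus_def by real_asymp
  then have "eventually (\<lambda>M. beta_plus a m M < -1) at_top"
    by (simp add: filterlim_at_bot_dense)
  then have "eventually (\<lambda>M. a + a * ln (1 - r a M) / r a M = L a M m) at_top"
    using eventually_gt_at_top[of 0]
    by eventually_elim (simp add: L_eq_closed_form[OF a m])
  moreover have "((\<lambda>M. a + a * ln (1 - r a M) / r a M) \<longlongrightarrow> a + ln (1 - a)) at_top"
    using a unfolding r_def by real_asymp
  ultimately show ?thesis by (rule Lim_transform_eventually[rotated])
qed

theorem lemma3p12:
  fixes a m :: real
  assumes "a < 0" and "-1 < m" and "m < 0"
  shows "(\<forall>M1 M2. 0 < M1 \<and> M1 < M2 \<and> beta_plus a m M1 < 0 \<and> beta_plus a m M2 < 0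
            \<longrightarrow> L a M1 m > L a M2 m)
         \<and> L a 0 m = 0
         \<and> ((\<lambda>M. L a M m) \<longlongrightarrow> a + ln (1 - a)) at_top"
  using L_strict_antimono[OF assms] L_at_zero tendsto_L_at_top[OF assms] by blast

end
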